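(* In the security-second routing model, for any destination $d$, attacker $m$, source AS $s$, and deployment (set of secure ASes) $S\subseteq V$, $s$ stabilizes to a route of the same type as any route in $\mathrm{BPR}(s,\emptyset,m,d)$.
   Context: An AS graph is an undirected graph $G=(V,E)$ of ASes; each edge is labeled customer–provider or peer–peer. Routing is to a destination $d$; $d$ announces "$d$" to neighbors; each other AS selects at most one route and announces it (prepended with itself) per the export policy (Ex): a route whose next hop is a customer is announced to all neighbors, otherwise only to customers. A route at $s$ is a customer/peer/provider route according to the relation of its next hop to $s$; its length is its number of hops in the announced AS path. Insecure ASes rank routes by (LP) customer over peer over provider, then (SP) shorter, then (TB) a fixed deterministic tie-break; in the security-second model, each secure AS (member of $S$) additionally prefers secure routes (all ASes on the route in $S$) over insecure ones, applied between LP and SP. Attack: attacker $m\ne d$ (not a neighbor of $d$) announces the bogus path "$m,d$" via insecure BGP to all neighbors. Perceivable routes: a simple route $R=(v_{i-1},\dots,v_1,d)$ is perceivable at $v_i$ if either (1) $R$ does not contain $m$ and for every $0<j<i$, $v_j$ announcing $(v_j,\dots,d)$ to $v_{j+1}$ does not violate Ex, or (2) $v_1=m$ and for every $1<j<i$, $v_j$ announcing $(v_j,\dots,d)$ to $v_{j+1}$ does not violate Ex. $\mathrm{PR}(s,m,d)$ is the set of perceivable routes at $s$; $\mathrm{BPR}(s,\emptyset,m,d)$ is the set of routes in $\mathrm{PR}(s,m,d)$ that $s$ prefers over all other perceivable routes according to the ranking before the tie-break step when no AS is secure (i.e., those of best LP type and, among them, shortest length). *)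

theory Defs
  imports Main "HOL-Library.Product_Lexorder"
begin

(* AS graph: prov u w  means  "w is a provider of u" (u is a customer of w);
   peer u w means u and w are peers. Every edge carries exactly one label. *)

definition adj :: "('v \<Rightarrow> 'v \<Rightarrow> bool) \<Rightarrow> ('v \<Rightarrow> 'v \<Rightarrow> bool) \<Rightarrow> 'v \<Rightarrow> 'v \<Rightarrow> bool" where
  "adj prov peer u w \<longleftrightarrow> prov u w \<or> prov w u \<or> peer u w"

definition as_graph :: "'v set \<Rightarrow> ('v \<Rightarrow> 'v \<Rightarrow> bool) \<Rightarrow> ('v \<Rightarrow> 'v \<Rightarrow> bool) \<Rightarrow> bool" where
  "as_graph V prov peer \<longleftrightarrow> finite V
     \<and> (\<forall>u w. prov u w \<longrightarrow> u \<in> V \<and> w \<in> V \<and> u \<noteq> w \<and> \<not> prov w u \<and> \<not> peer u w)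
     \<and> (\<forall>u w. peer u w \<longrightarrow> u \<in> V \<and> w \<in> V \<and> u \<noteq> w \<and> peer w u)"

definition gao_rexford :: "('v \<Rightarrow> 'v \<Rightarrow> bool) \<Rightarrow> bool" where
  "gao_rexford prov \<longleftrightarrow> acyclic {(u, w). prov u w}"

(* Relationship of neighbour w to AS s: 0 = customer, 1 = peer, 2 = provider *)
definition nbr_rank :: "('v \<Rightarrow> 'v \<Rightarrow> bool) \<Rightarrow> ('v \<Rightarrow> 'v \<Rightarrow> bool) \<Rightarrow> 'v \<Rightarrow> 'v \<Rightarrow> nat" where
  "nbr_rank prov peer s w = (if prov w s then 0 else if peer s w then 1 else 2)"

(* A route at s is represented by the full path [s, next hop, ..., d];
   its type is the relation of its next hop to s; its length is length - 1 hops. *)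
definition route_rank :: "('v \<Rightarrow> 'v \<Rightarrow> bool) \<Rightarrow> ('v \<Rightarrow> 'v \<Rightarrow> bool) \<Rightarrow> 'v list \<Rightarrow> nat" where
  "route_rank prov peer r = nbr_rank prov peer (r ! 0) (r ! 1)"

definition ex_ok :: "('v \<Rightarrow> 'v \<Rightarrow> bool) \<Rightarrow> 'v \<Rightarrow> 'v \<Rightarrow> 'v \<Rightarrow> bool" where
  "ex_ok prov x nh t \<longleftrightarrow> prov nh x \<or> prov t x"

(* Perceivable routes: p = [v_i, v_(i-1), ..., v_1, d] with v_i = s;
   position k of p holds v_(i-k). *)
definition perceivable :: "('v \<Rightarrow> 'v \<Rightarrow> bool) \<Rightarrow> ('v \<Rightarrow> 'v \<Rightarrow> bool) \<Rightarrow> 'v \<Rightarrow> 'v \<Rightarrow> 'v \<Rightarrow> 'v list \<Rightarrow> bool" where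
  "perceivable prov peer m d s p \<longleftrightarrow>
     2 \<le> length p \<and> hd p = s \<and> last p = d \<and> distinct p \<and>
     ((m \<notin> set p
        \<and> (\<forall>k. k + 1 < length p \<longrightarrow> adj prov peer (p ! k) (p ! (k + 1)))
        \<and> (\<forall>k. 1 \<le> k \<and> k + 1 < length p \<longrightarrow> ex_ok prov (p ! k) (p ! (k + 1)) (p ! (k - 1))))
      \<or>
      (p ! (length p - 2) = m
        \<and> (\<forall>k. k + 2 < length p \<longrightarrow> adj prov peer (p ! k) (p ! (k + 1)))
        \<and> (\<forall>k. 1 \<le> k \<and> k + 2 < length p \<longrightarrow> ex_ok prov (p ! k) (p ! (k + 1)) (p ! (k - 1)))))"

definition PR :: "('v \<Rightarrow> 'v \<Rightarrow> bool) \<Rightarrow> ('v \<Rightarrow> 'v \<Rightarrow> bool) \<Rightarrow> 'v \<Rightarrow> 'v \<Rightarrow> 'v \<Rightarrow> 'v list set" where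
  "PR prov peer s m d = {p. perceivable prov peer m d s p}"

definition BPR_empty :: "('v \<Rightarrow> 'v \<Rightarrow> bool) \<Rightarrow> ('v \<Rightarrow> 'v \<Rightarrow> bool) \<Rightarrow> 'v \<Rightarrow> 'v \<Rightarrow> 'v \<Rightarrow> 'v list set" where
  "BPR_empty prov peer s m d = {p \<in> PR prov peer s m d. \<forall>q \<in> PR prov peer s m d.
       route_rank prov peer p < route_rank prov peer q
     \<or> (route_rank prov peer p = route_rank prov peer q \<and> length p \<le> length q)}"

(* A route is secure if all ASes on it are secure; the attacker's bogus
   announcement is made via insecure BGP, so routes through m are insecure. *)
definition secure_route :: "'v set \<Rightarrow> 'v \<Rightarrow> 'v list \<Rightarrow> bool" where
  "secure_route S m r \<longleftrightarrow> set r \<subseteq> S \<and> m \<notin> set r"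

definition sec2_key :: "('v \<Rightarrow> 'v \<Rightarrow> bool) \<Rightarrow> ('v \<Rightarrow> 'v \<Rightarrow> bool) \<Rightarrow> 'v set \<Rightarrow> 'v \<Rightarrow> 'v \<Rightarrow> 'v list \<Rightarrow> nat \<times> nat \<times> nat" where
  "sec2_key prov peer S m v r =
     (route_rank prov peer r, (if v \<in> S \<and> \<not> secure_route S m r then 1 else 0), length r)"

definition avail :: "('v \<Rightarrow> 'v \<Rightarrow> bool) \<Rightarrow> ('v \<Rightarrow> 'v \<Rightarrow> bool) \<Rightarrow> 'v \<Rightarrow> 'v \<Rightarrow> ('v \<Rightarrow> 'v list option) \<Rightarrow> 'v \<Rightarrow> 'v list set" where
  "avail prov peer m d pi v = {v # q | q w. adj prov peer v w \<and> pi w = Some q \<and> v \<notin> set q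
       \<and> (w = d \<or> w = m \<or> ex_ok prov w (q ! 1) v)}"

definition stable_sec2 :: "'v set \<Rightarrow> ('v \<Rightarrow> 'v \<Rightarrow> bool) \<Rightarrow> ('v \<Rightarrow> 'v \<Rightarrow> bool) \<Rightarrow> 'v set
     \<Rightarrow> ('v \<Rightarrow> ('v list \<times> 'v list) set) \<Rightarrow> 'v \<Rightarrow> 'v \<Rightarrow> ('v \<Rightarrow> 'v list option) \<Rightarrow> bool" where
  "stable_sec2 V prov peer S tb m d pi \<longleftrightarrow>
     pi d = Some [d] \<and> pi m = Some [m, d] \<and>
     (\<forall>v \<in> V - {d, m}.
        (avail prov peer m d pi v = {} \<longrightarrow> pi v = None) \<and>
        (avail prov peer m d pi v \<noteq> {} \<longrightarrow>
           (\<exists>r \<in> avail prov peer m d pi v. pi v = Some r \<and>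
              (\<forall>r' \<in> avail prov peer m d pi v.
                  sec2_key prov peer S m v r < sec2_key prov peer S m v r'
                \<or> (sec2_key prov peer S m v r = sec2_key prov peer S m v r' \<and> (r, r') \<in> tb v)))))"

end

theory Submission
  imports Defs
begin

text \<open>
  Every route selected in a stable state is perceivable, so the route selected by \<open>s\<close> is no
  better in LP class than the routes of BPR. Conversely, induction along a perceivable route
  \<open>v # w # q\<close> shows that \<open>v\<close> selects a route at least as good in LP class: the next hop \<open>w\<close>
  selects a route at least as good as \<open>w # q\<close>, and if \<open>v\<close> is not a customer of \<open>w\<close>, Ex forces
  \<open>w # q\<close>, and with it the route of \<open>w\<close>, to be a customer route, which \<open>w\<close> may export to \<open>v\<close>.
  Security is ranked below LP, so the choice of \<open>v\<close> is at least as good as this offer. If \<open>v\<close>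
  already lies on the route of \<open>w\<close>, its own route is a suffix of it, and suffixes of customer
  routes are customer routes.
\<close>

lemma all_nat_conv_0_Suc: "(\<forall>k::nat. P k) \<longleftrightarrow> P 0 \<and> (\<forall>k. P (Suc k))"
  by (metis not0_implies_Suc)

fun exports_ok :: "('v \<Rightarrow> 'v \<Rightarrow> bool) \<Rightarrow> 'v list \<Rightarrow> bool" where
  "exports_ok prov (u # w # x # p) \<longleftrightarrow> ex_ok prov w x u \<and> exports_ok prov (w # x # p)"
| "exports_ok prov _ \<longleftrightarrow> True"

lemma exports_ok_Cons:
  "exports_ok prov (u # w # p) \<longleftrightarrow> p = [] \<or> ex_ok prov w (hd p) u \<and> exports_ok prov (w # p)"
  by (cases p) auto

lemma exports_ok_conv_nth:
  "exports_ok prov p \<longleftrightarrow>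
     (\<forall>k. 1 \<le> k \<and> k + 1 < length p \<longrightarrow> ex_ok prov (p ! k) (p ! (k + 1)) (p ! (k - 1)))"
proof -
  have shifted: "exports_ok prov p \<longleftrightarrow>
     (\<forall>k. k + 2 < length p \<longrightarrow> ex_ok prov (p ! (k + 1)) (p ! (k + 2)) (p ! k))"
    by (induction prov p rule: exports_ok.induct) (subst all_nat_conv_0_Suc; simp)+
  show ?thesis
    unfolding shifted by (subst (2) all_nat_conv_0_Suc) simp
qed

lemma perceivable_iff:
  "perceivable prov peer m d s p \<longleftrightarrow> 2 \<le> length p \<and> hd p = s \<and> last p = d \<and> distinct p \<and>
     (m \<notin> set p \<and> successively (adj prov peer) p \<and> exports_ok prov p
      \<or> last (butlast p) = m \<and> successively (adj prov peer) (butlast p) \<and> exports_ok prov (butlast p))"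
proof -
  have "p ! (length p - 2) = last (butlast p)" if "2 \<le> length p"
  proof -
    have "butlast p \<noteq> []" using that by (cases p rule: rev_cases) auto
    then show ?thesis using that by (simp add: last_conv_nth nth_butlast numeral_2_eq_2)
  qed
  then show ?thesis
    unfolding perceivable_def successively_conv_nth exports_ok_conv_nth
    by (auto simp: nth_butlast)
qed

lemma perceivable_Cons:
  assumes "v \<noteq> m" "m \<noteq> d"
  shows "perceivable prov peer m d v (v # w # q) \<longleftrightarrow> adj prov peer v w \<and> v \<notin> set (w # q) \<and>
     (w # q = [d] \<or> w # q = [m, d]
      \<or> w \<notin> {d, m} \<and> perceivable prov peer m d w (w # q) \<and> ex_ok prov w (hd q) v)"
proof -
  have "last (butlast xs) \<in> set xs" if "butlast xs \<noteq> []" for xs :: "'a list"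
    using that by (meson in_set_butlastD last_in_set)
  then show ?thesis
    using assms unfolding perceivable_iff
    by (cases q) (auto simp: successively_Cons exports_ok_Cons)
qed

lemma perceivable_ConsE:
  assumes "perceivable prov peer m d v p"
  obtains w q where "p = v # w # q" "v \<noteq> d"
proof -
  have "2 \<le> length p" "hd p = v" "last p = d" "distinct p"
    using assms unfolding perceivable_def by auto
  then obtain w q where p: "p = v # w # q"
    by (cases p; cases "tl p") auto
  moreover have "v \<noteq> d"
    using \<open>last p = d\<close> \<open>distinct p\<close> unfolding p by (metis distinct.simps(2) last_ConsR last_in_set list.discI)
  ultimately show ?thesis using that by blast
qed

lemma route_rank_Cons: "route_rank prov peer (v # w # q) = nbr_rank prov peer v w"
  by (simp add: route_rank_def)

lemma route_rank_le_2: "route_rank prov peer r \<le> 2"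
  by (simp add: route_rank_def nbr_rank_def)

lemma nbr_rank_eq_0_iff: "nbr_rank prov peer v w = 0 \<longleftrightarrow> prov w v"
  by (simp add: nbr_rank_def)

locale stable_routing =
  fixes V :: "'v set" and prov peer :: "'v \<Rightarrow> 'v \<Rightarrow> bool" and S :: "'v set"
    and tb :: "'v \<Rightarrow> ('v list \<times> 'v list) set"
    and pi :: "'v \<Rightarrow> 'v list option" and d m :: 'v
  assumes as_graph: "as_graph V prov peer" and attacker_neq_dest: "m \<noteq> d"
    and stable: "stable_sec2 V prov peer S tb m d pi"
begin

lemma pi_dest: "pi d = Some [d]"
  using stable unfolding stable_sec2_def by blast

lemma pi_attacker: "pi m = Some [m, d]"
  using stable unfolding stable_sec2_def by blast

lemma adj_in_V: "adj prov peer u w \<Longrightarrow> w \<in> V"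
  using as_graph unfolding adj_def as_graph_def by blast

lemma prov_asym: "prov u w \<Longrightarrow> \<not> prov w u"
  using as_graph unfolding as_graph_def by blast

lemma nbr_rank_provider: "prov v w \<Longrightarrow> nbr_rank prov peer v w = 2"
  using as_graph unfolding as_graph_def nbr_rank_def by auto

abbreviation "avail_at \<equiv> avail prov peer m d pi"

lemma selects_best:
  assumes "v \<in> V" "v \<notin> {d, m}"
  shows "avail_at v = {} \<Longrightarrow> pi v = None"
    and "r' \<in> avail_at v \<Longrightarrow> \<exists>r \<in> avail_at v. pi v = Some r \<and>
           (sec2_key prov peer S m v r < sec2_key prov peer S m v r'
            \<or> sec2_key prov peer S m v r = sec2_key prov peer S m v r' \<and> (r, r') \<in> tb v)"
  using stable assms unfolding stable_sec2_def by blast+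

lemma selected_route_avail:
  assumes "v \<in> V" "v \<notin> {d, m}" "pi v = Some r"
  shows "r \<in> avail_at v"
  using selects_best[OF assms(1,2)] assms(3) by fastforce

lemma select_via_neighbour:
  assumes "v \<in> V" "v \<notin> {d, m}" "adj prov peer v w" "pi w = Some (w # q)" "v \<notin> set (w # q)"
    and "w = d \<or> w = m \<or> ex_ok prov w (q ! 0) v"
  shows "\<exists>r. pi v = Some r \<and> route_rank prov peer r \<le> nbr_rank prov peer v w"
proof -
  have "v # w # q \<in> avail_at v"
    unfolding avail_def using assms(3-6) by fastforce
  then obtain r where "pi v = Some r"
    and "sec2_key prov peer S m v r \<le> sec2_key prov peer S m v (v # w # q)"
    using selects_best(2)[OF assms(1,2)] by fastforce
  \<comment> \<open>the key is lexicographic with the LP class first, so security cannot outweigh it\<close>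
  then show ?thesis
    by (auto simp: sec2_key_def route_rank_Cons)
qed

lemma selected_route_induct [consumes 2, case_names dest attacker neighbour]:
  assumes "x \<in> V" "pi x = Some r"
    and "P d [d]" and "P m [m, d]"
    and step: "\<And>v w q. v \<in> V \<Longrightarrow> v \<notin> {d, m} \<Longrightarrow> adj prov peer v w \<Longrightarrow> pi w = Some q
      \<Longrightarrow> pi v = Some (v # q) \<Longrightarrow> v \<notin> set q \<Longrightarrow> w = d \<or> w = m \<or> ex_ok prov w (q ! 1) v
      \<Longrightarrow> P w q \<Longrightarrow> P v (v # q)"
  shows "P x r"
  using assms(1,2)
proof (induction "length r" arbitrary: x r rule: less_induct)
  case less
  show ?case
  proof (cases "x \<in> {d, m}")
    case True
    then show ?thesis using less.prems pi_dest pi_attacker assms(3,4) by auto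
  next
    case False
    then have "r \<in> avail_at x" using less.prems selected_route_avail by blast
    then obtain w q where "r = x # q" "adj prov peer x w" "pi w = Some q" "x \<notin> set q"
      "w = d \<or> w = m \<or> ex_ok prov w (q ! 1) x"
      unfolding avail_def by blast
    moreover have "P w q"
      using less.hyps[of q w] calculation adj_in_V by simp
    ultimately show ?thesis using step less.prems False by blast
  qed
qed

lemma selected_route_Cons:
  assumes "x \<in> V" "pi x = Some r"
  shows "\<exists>q. r = x # q \<and> (x \<noteq> d \<longrightarrow> q \<noteq> [])"
  using assms by (induction rule: selected_route_induct) (use pi_dest in auto)

lemma selected_route_perceivable:
  assumes "x \<in> V" "x \<noteq> d" "pi x = Some r"
  shows "perceivable prov peer m d x r"
  using assms(1,3,2)
proof (induction rule: selected_route_induct)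
  case attacker
  show ?case
    using attacker_neq_dest by (simp add: perceivable_iff)
next
  case (neighbour v w q)
  obtain q' where q: "q = w # q'" "w \<noteq> d \<longrightarrow> q' \<noteq> []"
    using selected_route_Cons[OF adj_in_V] neighbour by blast
  have "q = [d] \<or> q = [m, d] \<or> w \<notin> {d, m} \<and> perceivable prov peer m d w q \<and> ex_ok prov w (hd q') v"
  proof (cases "w \<in> {d, m}")
    case True
    then show ?thesis using neighbour pi_dest pi_attacker by auto
  next
    case False
    then show ?thesis using neighbour q by (auto simp: hd_conv_nth)
  qed
  then show ?case
    using neighbour q attacker_neq_dest by (simp add: perceivable_Cons)
qed simp

lemma selected_on_route:
  assumes "x \<in> V" "pi x = Some r" "y \<in> set r"
  shows "\<exists>r'. pi y = Some r'"
  using assms by (induction rule: selected_route_induct) (use pi_dest pi_attacker in auto)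

lemma customer_route_on_route:
  assumes "x \<in> V" "pi x = Some r" "route_rank prov peer r = 0" "y \<in> set r" "y \<notin> {d, m}"
  shows "\<exists>r'. pi y = Some r' \<and> route_rank prov peer r' = 0"
  using assms
proof (induction rule: selected_route_induct)
  case (neighbour v w q)
  show ?case
  proof (cases "y = v")
    case True
    then show ?thesis using neighbour by blast
  next
    case False
    then have "y \<in> set q" using neighbour.prems by simp
    then have "w \<notin> {d, m}" using neighbour pi_dest pi_attacker by auto
    moreover obtain q' where q: "q = w # q'" "w \<noteq> d \<longrightarrow> q' \<noteq> []"
      using selected_route_Cons[OF adj_in_V] neighbour by blast
    moreover have "prov w v"
      using neighbour.prems q by (simp add: route_rank_Cons nbr_rank_eq_0_iff)
    ultimately have "q' \<noteq> []" "prov (hd q') w"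
      using neighbour prov_asym unfolding ex_ok_def by (auto simp: hd_conv_nth)
    then have "route_rank prov peer q = 0"
      using q by (cases q') (auto simp: route_rank_Cons nbr_rank_eq_0_iff)
    then show ?thesis using neighbour \<open>y \<in> set q\<close> by blast
  qed
qed auto

lemma selected_rank_le_perceivable:
  assumes "perceivable prov peer m d v p" "v \<in> V" "v \<noteq> m"
  shows "\<exists>r. pi v = Some r \<and> route_rank prov peer r \<le> route_rank prov peer p"
  using assms
proof (induction "length p" arbitrary: v p rule: less_induct)
  case less
  obtain w q where p: "p = v # w # q" and "v \<noteq> d"
    using perceivable_ConsE[OF less.prems(1)] by blast
  then have v: "v \<notin> {d, m}" using less.prems(3) by blast
  have adj: "adj prov peer v w" and v_off: "v \<notin> set (w # q)"
    and "w # q = [d] \<or> w # q = [m, d]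
      \<or> w \<notin> {d, m} \<and> perceivable prov peer m d w (w # q) \<and> ex_ok prov w (hd q) v"
    using less.prems(1) unfolding p perceivable_Cons[OF less.prems(3) attacker_neq_dest] by auto
  then consider (dest) "w # q = [d]" | (attacker) "w # q = [m, d]"
    | (transit) "w \<notin> {d, m}" "perceivable prov peer m d w (w # q)" "ex_ok prov w (hd q) v"
    by blast
  then have "\<exists>r. pi v = Some r \<and> route_rank prov peer r \<le> nbr_rank prov peer v w"
  proof cases
    case dest
    then show ?thesis
      using select_via_neighbour[OF less.prems(2) v adj] pi_dest v_off by auto
  next
    case attacker
    then show ?thesis
      using select_via_neighbour[OF less.prems(2) v adj] pi_attacker v_off by auto
  next
    case transit
    have wV: "w \<in> V" using adj adj_in_V by blast
    obtain r1 where r1: "pi w = Some r1" "route_rank prov peer r1 \<le> route_rank prov peer (w # q)"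
      using less.hyps[of "w # q" w] transit wV p by auto
    obtain q1 where q1: "r1 = w # q1" "q1 \<noteq> []"
      using selected_route_Cons[OF wV r1(1)] transit by auto
    have customer: "route_rank prov peer r1 = 0" if "\<not> prov v w"
    proof -
      obtain x q' where "q = x # q'"
        using perceivable_ConsE[OF transit(2)] by blast
      then have "route_rank prov peer (w # q) = 0"
        using transit(3) that by (simp add: ex_ok_def route_rank_Cons nbr_rank_eq_0_iff)
      then show ?thesis using r1(2) by simp
    qed
    show ?thesis
    proof (cases "v \<in> set r1")
      case False
      have "ex_ok prov w (q1 ! 0) v"
        using customer q1 by (cases q1) (auto simp: ex_ok_def route_rank_Cons nbr_rank_eq_0_iff)
      then show ?thesis
        using select_via_neighbour[OF less.prems(2) v adj] r1(1) q1(1) False by auto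
    next
      case True
      \<comment> \<open>\<open>v\<close> routes along a suffix of the route of \<open>w\<close>\<close>
      show ?thesis
      proof (cases "prov v w")
        case True
        then show ?thesis
          using selected_on_route[OF wV r1(1) \<open>v \<in> set r1\<close>] nbr_rank_provider route_rank_le_2
          by fastforce
      next
        case False
        then show ?thesis
          using customer_route_on_route[OF wV r1(1) customer[OF False] \<open>v \<in> set r1\<close> v] by auto
      qed
    qed
  qed
  then show ?case using p by (simp add: route_rank_Cons)
qed

end

theorem mainTheorem7:
  fixes V S :: "'v set" and prov peer :: "'v \<Rightarrow> 'v \<Rightarrow> bool"
    and tb :: "'v \<Rightarrow> ('v list \<times> 'v list) set"
    and pi :: "'v \<Rightarrow> 'v list option" and d m s :: 'v and R :: "'v list"
  assumes "as_graph V prov peer" and "gao_rexford prov"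
    and "d \<in> V" and "m \<in> V" and "s \<in> V" and "m \<noteq> d" and "\<not> adj prov peer m d"
    and "s \<noteq> m" and "S \<subseteq> V"
    and "\<forall>v. linear_order (tb v)"
    and "stable_sec2 V prov peer S tb m d pi"
    and "R \<in> BPR_empty prov peer s m d"
  shows "\<exists>r. pi s = Some r \<and> route_rank prov peer r = route_rank prov peer R"
proof -
  \<comment> \<open>Gao-Rexford, the tie-breaks and \<open>S\<close> matter only for the existence of a stable state\<close>
  interpret stable_routing V prov peer S tb pi d m
    using assms by unfold_locales
  have R: "perceivable prov peer m d s R"
    and R_best: "\<And>q. perceivable prov peer m d s q \<Longrightarrow> route_rank prov peer R \<le> route_rank prov peer q"
    using assms(12) unfolding BPR_empty_def PR_def by auto
  obtain r where r: "pi s = Some r" "route_rank prov peer r \<le> route_rank prov peer R"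
    using selected_rank_le_perceivable[OF R \<open>s \<in> V\<close> \<open>s \<noteq> m\<close>] by blast
  have "s \<noteq> d" using perceivable_ConsE[OF R] by blast
  then have "perceivable prov peer m d s r"
    using selected_route_perceivable \<open>s \<in> V\<close> r(1) by blast
  then show ?thesis using r R_best[of r] by auto
qed

end
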